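(* Let $G \leq \mathrm{Homeo}(\mathbb{S}^1)$ be a group whose action on $\mathbb{S}^1$ is minimal and not topologically free. Suppose that $G$ acts faithfully on a set $\Omega$ such that for every $\Delta \in \Omega^{\{2\}}$, the action of $G_\Delta$ on $\mathbb{S}^1$ is minimal. Then there exists $\omega \in \Omega$ such that the action of $G_\omega$ on $\mathbb{S}^1$ is not topologically free.
   Context: An action on $\mathbb{S}^1$ is minimal if every orbit is dense, and topologically free if the fixed point set of every non-trivial element has empty interior. $\Omega^{\{2\}}$ is the set of unordered pairs of elements of $\Omega$, $G_\Delta$ the pointwise stabilizer of $\Delta$, and $G_\omega$ the stabilizer of $\omega$. *)

theory Defs
  imports "HOL-Analysis.Analysis" "HOL-Algebra.Group_Action"
begin

definition S1 :: "complex set" where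
  "S1 = sphere 0 1"

text \<open>Homeo(S^1): homeomorphisms of S1, extended by the identity outside S1
  (so that equality of maps is equality on S1).\<close>
definition Homeo_S1 :: "(complex \<Rightarrow> complex) set" where
  "Homeo_S1 = {f. (\<exists>g. homeomorphism S1 S1 f g) \<and> (\<forall>x. x \<notin> S1 \<longrightarrow> f x = x)}"

definition homeo_group :: "(complex \<Rightarrow> complex) set \<Rightarrow> (complex \<Rightarrow> complex) monoid" where
  "homeo_group G = \<lparr>carrier = G, mult = (\<circ>), one = id\<rparr>"

definition homeo_subgroup :: "(complex \<Rightarrow> complex) set \<Rightarrow> bool" where
  "homeo_subgroup G \<longleftrightarrow> G \<subseteq> Homeo_S1 \<and> group (homeo_group G)"

definition minimal_action :: "(complex \<Rightarrow> complex) set \<Rightarrow> bool" where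
  "minimal_action H \<longleftrightarrow> (\<forall>x\<in>S1. S1 \<subseteq> closure {h x | h. h \<in> H})"

definition topologically_free :: "(complex \<Rightarrow> complex) set \<Rightarrow> bool" where
  "topologically_free H \<longleftrightarrow>
     (\<forall>h\<in>H. h \<noteq> id \<longrightarrow> (top_of_set S1) interior_of {x\<in>S1. h x = x} = {})"

definition pointwise_stabilizer :: "_ \<Rightarrow> ('a \<Rightarrow> 'b \<Rightarrow> 'b) \<Rightarrow> 'b set \<Rightarrow> 'a set" where
  "pointwise_stabilizer G \<phi> D = {g \<in> carrier G. \<forall>d\<in>D. \<phi> g d = d}"

end

theory Submission
  imports Defs
begin

text \<open>Take \<open>g \<noteq> id\<close> whose fixed-point set has nonempty interior \<open>A\<close>. As \<open>S\<^sup>1\<close> is connected,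
  the proper open set \<open>A\<close> is not closed, so some \<open>p \<notin> A\<close> lies in its closure. Faithfulness
  gives \<open>\<omega>\<close> with \<open>g \<omega> \<noteq> \<omega>\<close>, and minimality of the pointwise stabilizer of \<open>{\<omega>, g \<omega>}\<close> gives
  an \<open>h\<close> in it with \<open>h p \<in> A\<close>. The commutator \<open>c = g\<inverse> h\<inverse> g h\<close> then fixes \<open>\<omega>\<close>.
  The open neighbourhood \<open>W = h\<inverse> A\<close> of \<open>p\<close> meets \<open>A\<close>, and \<open>c\<close> is the identity on the open
  set \<open>W \<inter> A\<close>; but \<open>W \<subseteq> Fix g\<close> would force \<open>W \<subseteq> A\<close>, so some \<open>z \<in> W\<close> is moved by \<open>g\<close>,
  and \<open>c z = g\<inverse> z \<noteq> z\<close>.\<close>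

lemma openin_proper_has_closure_point_outside:
  assumes "connected_space X" "openin X A" "A \<noteq> {}" "A \<noteq> topspace X"
  obtains p where "p \<in> X closure_of A" "p \<notin> A"
  using assms connected_space_frontier_eq_empty[of X A]
  by (auto simp: frontier_of_openin openin_subset)

lemma commutator_fixes_open_set_and_moves_point:
  fixes X :: "'a topology" and g :: "'a \<Rightarrow> 'a"
  defines "A \<equiv> X interior_of {x \<in> topspace X. g x = x}"
  assumes h: "continuous_map X X h"
    and g_inv: "\<And>x. g' (g x) = x" "\<And>x. g (g' x) = x"
    and h_inv: "\<And>x. h' (h x) = x"
    and p: "p \<in> X closure_of A" "p \<notin> A" "h p \<in> A"
  shows "\<exists>z\<in>topspace X. g' (h' (g (h z))) \<noteq> z"
    and "X interior_of {x \<in> topspace X. g' (h' (g (h x))) = x} \<noteq> {}"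
proof -
  have fixed: "g x = x" "x \<in> topspace X" if "x \<in> A" for x
    using that interior_of_subset[of X "{x \<in> topspace X. g x = x}"] by (auto simp: A_def)
  define W where "W = {x \<in> topspace X. h x \<in> A}"
  have W: "openin X W"
    unfolding W_def A_def by (rule openin_continuous_map_preimage[OF h openin_interior_of])
  have "p \<in> W" using p by (auto simp: W_def in_closure_of)
  have "\<not> W \<subseteq> {x \<in> topspace X. g x = x}"
  proof
    assume "W \<subseteq> {x \<in> topspace X. g x = x}"
    then have "W \<subseteq> A" unfolding A_def using W by (rule interior_of_maximal)
    with \<open>p \<in> W\<close> \<open>p \<notin> A\<close> show False by blast
  qed
  then obtain z where z: "z \<in> W" "g z \<noteq> z" by (auto simp: W_def)
  have "g' (h' (g (h z))) = g' z" using z(1) fixed h_inv by (simp add: W_def)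
  moreover have "g' z \<noteq> z" using z(2) g_inv(2) by metis
  ultimately show "\<exists>z\<in>topspace X. g' (h' (g (h z))) \<noteq> z"
    using z(1) by (intro bexI[of _ z]) (simp_all add: W_def)
  have "W \<inter> A \<subseteq> {x \<in> topspace X. g' (h' (g (h x))) = x}"
  proof
    fix x assume x: "x \<in> W \<inter> A"
    then have "g (h x) = h x" "g x = x" "x \<in> topspace X" using fixed by (auto simp: W_def)
    then have "g' (h' (g (h x))) = g' (g x)" by (simp add: h_inv)
    with \<open>x \<in> topspace X\<close> show "x \<in> {x \<in> topspace X. g' (h' (g (h x))) = x}"
      by (simp add: g_inv(1))
  qed
  then have "W \<inter> A \<subseteq> X interior_of {x \<in> topspace X. g' (h' (g (h x))) = x}"
    using W by (intro interior_of_maximal) (auto simp: A_def)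
  moreover have "W \<inter> A \<noteq> {}" using p(1) W \<open>p \<in> W\<close> by (auto simp: in_closure_of)
  ultimately show "X interior_of {x \<in> topspace X. g' (h' (g (h x))) = x} \<noteq> {}" by blast
qed

lemma (in faithful_action) nontrivial_moves_point:
  assumes "g \<in> carrier G" "g \<noteq> \<one>\<^bsub>G\<^esub>"
  obtains x where "x \<in> E" "\<phi> g x \<noteq> x"
proof -
  interpret group G using group_hom group_hom.axioms(1) by auto
  have "\<phi> g \<noteq> \<phi> \<one>" using assms by (simp add: inj_on_eq_iff[OF faithful])
  then obtain x where x: "\<phi> g x \<noteq> (\<lambda>x\<in>E. x) x" by (auto simp: id_eq_one[symmetric] fun_eq_iff)
  moreover have "\<phi> g \<in> extensional E" using bij_prop0[OF assms(1)] by (simp add: Bij_def)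
  ultimately have "x \<in> E" by (auto simp: extensional_def split: if_split_asm)
  with x show thesis using that by simp
qed

lemma (in group_action) commutator_in_stabilizer:
  assumes g: "g \<in> carrier G" and h: "h \<in> carrier G" and x: "x \<in> E"
    and "\<phi> h x = x" "\<phi> h (\<phi> g x) = \<phi> g x"
  shows "inv\<^bsub>G\<^esub> g \<otimes>\<^bsub>G\<^esub> inv\<^bsub>G\<^esub> h \<otimes>\<^bsub>G\<^esub> g \<otimes>\<^bsub>G\<^esub> h \<in> stabilizer G \<phi> x"
proof -
  interpret group G using group_hom group_hom.axioms(1) by auto
  have gx: "\<phi> g x \<in> E" using element_image[OF g x refl] .
  have "\<phi> (inv g \<otimes> inv h \<otimes> g \<otimes> h) x = \<phi> (inv g) (\<phi> (inv h) (\<phi> g x))"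
    using g h x gx assms(4) by (simp add: composition_rule)
  also have "\<dots> = x"
    using orbit_sym_aux[OF h gx assms(5)] orbit_sym_aux[OF g x refl] by simp
  finally show ?thesis using g h by (simp add: stabilizer_def)
qed

abbreviation fixed_interior_S1 :: "(complex \<Rightarrow> complex) \<Rightarrow> complex set" where
  "fixed_interior_S1 g \<equiv> top_of_set S1 interior_of {x \<in> S1. g x = x}"

lemma connected_space_S1: "connected_space (top_of_set S1)"
  using connected_sphere[of "0::complex" 1] connected_space_subtopology[of euclidean S1]
  by (simp add: S1_def)

lemma Homeo_S1_continuous_map:
  "f \<in> Homeo_S1 \<Longrightarrow> continuous_map (top_of_set S1) (top_of_set S1) f"
  unfolding Homeo_S1_def homeomorphism_def by auto

lemma Homeo_S1_fixed_interior_closure_point: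
  assumes "g \<in> Homeo_S1" "g \<noteq> id" "fixed_interior_S1 g \<noteq> {}"
  obtains p where "p \<in> S1" "p \<in> top_of_set S1 closure_of fixed_interior_S1 g"
    "p \<notin> fixed_interior_S1 g"
proof -
  obtain x where "g x \<noteq> x" using assms(2) by (auto simp: fun_eq_iff)
  moreover from this have "x \<in> S1" using assms(1) by (auto simp: Homeo_S1_def)
  ultimately have "fixed_interior_S1 g \<noteq> topspace (top_of_set S1)"
    using interior_of_subset[of "top_of_set S1" "{x \<in> S1. g x = x}"] by auto
  with openin_proper_has_closure_point_outside[OF connected_space_S1 openin_interior_of assms(3)]
  obtain p where "p \<in> top_of_set S1 closure_of fixed_interior_S1 g" "p \<notin> fixed_interior_S1 g"
    by blast
  moreover from this have "p \<in> S1" by (simp add: in_closure_of)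
  ultimately show thesis using that by blast
qed

lemma homeo_group_inv_apply:
  assumes "group (homeo_group G)" "f \<in> G"
  shows "(inv\<^bsub>homeo_group G\<^esub> f) (f x) = x" "f ((inv\<^bsub>homeo_group G\<^esub> f) x) = x"
proof -
  let ?H = "homeo_group G"
  interpret group ?H by (fact assms(1))
  have "f \<in> carrier ?H" using assms(2) by (simp add: homeo_group_def)
  then have "inv\<^bsub>?H\<^esub> f \<otimes>\<^bsub>?H\<^esub> f = \<one>\<^bsub>?H\<^esub>" "f \<otimes>\<^bsub>?H\<^esub> inv\<^bsub>?H\<^esub> f = \<one>\<^bsub>?H\<^esub>"
    by simp_all
  then show "(inv\<^bsub>?H\<^esub> f) (f x) = x" "f ((inv\<^bsub>?H\<^esub> f) x) = x"
    by (simp_all add: homeo_group_def fun_eq_iff)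
qed

lemma homeo_group_commutator_fixes_open_set:
  fixes G :: "(complex \<Rightarrow> complex) set" and g h :: "complex \<Rightarrow> complex"
  defines "c \<equiv> inv\<^bsub>homeo_group G\<^esub> g \<otimes>\<^bsub>homeo_group G\<^esub> inv\<^bsub>homeo_group G\<^esub> h
    \<otimes>\<^bsub>homeo_group G\<^esub> g \<otimes>\<^bsub>homeo_group G\<^esub> h"
  assumes grp: "group (homeo_group G)" and "G \<subseteq> Homeo_S1" "g \<in> G" "h \<in> G"
    and p: "p \<in> top_of_set S1 closure_of fixed_interior_S1 g" "p \<notin> fixed_interior_S1 g"
      "h p \<in> fixed_interior_S1 g"
  shows "c \<noteq> id" "fixed_interior_S1 c \<noteq> {}"
proof -
  have h_cont: "continuous_map (top_of_set S1) (top_of_set S1) h"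
    using Homeo_S1_continuous_map assms(3,5) by blast
  have "c = inv\<^bsub>homeo_group G\<^esub> g \<circ> inv\<^bsub>homeo_group G\<^esub> h \<circ> g \<circ> h"
    by (simp add: c_def homeo_group_def)
  then have "(\<exists>z\<in>S1. c z \<noteq> z) \<and> fixed_interior_S1 c \<noteq> {}"
    using commutator_fixes_open_set_and_moves_point[OF h_cont
        homeo_group_inv_apply[OF grp assms(4)] homeo_group_inv_apply(1)[OF grp assms(5)]] p
    by simp
  then show "c \<noteq> id" "fixed_interior_S1 c \<noteq> {}" by auto
qed

lemma minimal_action_orbit_meets_openin:
  assumes "minimal_action H" "H \<subseteq> Homeo_S1" "x \<in> S1"
    and "openin (top_of_set S1) A" "A \<noteq> {}"
  obtains h where "h \<in> H" "h x \<in> A"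
proof -
  obtain T where T: "open T" "A = T \<inter> S1" using assms(4) by (auto simp: openin_open)
  from \<open>A \<noteq> {}\<close> obtain a where "a \<in> A" by blast
  then have "a \<in> closure {h x | h. h \<in> H}"
    using assms(1,3) T(2) unfolding minimal_action_def by blast
  then obtain h where "h \<in> H" "h x \<in> T"
    using T \<open>a \<in> A\<close> open_Int_closure_eq_empty by blast
  moreover have "h x \<in> S1"
    using \<open>h \<in> H\<close> assms(2,3) unfolding Homeo_S1_def homeomorphism_def by blast
  ultimately show thesis using that T(2) by blast
qed

theorem lemma4p4:
  fixes G :: "(complex \<Rightarrow> complex) set"
    and \<Omega> :: "'b set"
    and \<phi> :: "(complex \<Rightarrow> complex) \<Rightarrow> 'b \<Rightarrow> 'b"
  assumes "homeo_subgroup G"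
    and "minimal_action G"
    and "\<not> topologically_free G"
    and "faithful_action (homeo_group G) \<Omega> \<phi>"
    and "\<And>\<Delta>. \<Delta> \<subseteq> \<Omega> \<Longrightarrow> card \<Delta> = 2 \<Longrightarrow>
           minimal_action (pointwise_stabilizer (homeo_group G) \<phi> \<Delta>)"
  shows "\<exists>\<omega>\<in>\<Omega>. \<not> topologically_free (stabilizer (homeo_group G) \<phi> \<omega>)"
proof -
  let ?H = "homeo_group G"
  have grp: "group ?H" and GH: "G \<subseteq> Homeo_S1" using assms(1) by (auto simp: homeo_subgroup_def)
  interpret faithful_action ?H \<Omega> \<phi> by (fact assms(4))
  have H: "carrier ?H = G" "\<one>\<^bsub>?H\<^esub> = id" by (simp_all add: homeo_group_def)
  obtain g where g: "g \<in> G" "g \<noteq> id" "fixed_interior_S1 g \<noteq> {}"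
    using assms(3) unfolding topologically_free_def by blast
  then obtain p where p: "p \<in> S1" "p \<in> top_of_set S1 closure_of fixed_interior_S1 g"
    "p \<notin> fixed_interior_S1 g"
    using GH Homeo_S1_fixed_interior_closure_point by blast
  have "g \<in> carrier ?H" "g \<noteq> \<one>\<^bsub>?H\<^esub>" using g H by simp_all
  then obtain \<omega> where \<omega>: "\<omega> \<in> \<Omega>" "\<phi> g \<omega> \<noteq> \<omega>" by (rule nontrivial_moves_point)
  define \<Delta> where "\<Delta> = {\<omega>, \<phi> g \<omega>}"
  have "\<Delta> \<subseteq> \<Omega>" "card \<Delta> = 2"
    using \<omega> element_image[OF \<open>g \<in> carrier ?H\<close> \<omega>(1) refl] by (auto simp: \<Delta>_def)
  then have "minimal_action (pointwise_stabilizer ?H \<phi> \<Delta>)" by (rule assms(5))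
  moreover have "pointwise_stabilizer ?H \<phi> \<Delta> \<subseteq> Homeo_S1"
    using GH by (auto simp: pointwise_stabilizer_def H)
  ultimately obtain h where h: "h \<in> pointwise_stabilizer ?H \<phi> \<Delta>" "h p \<in> fixed_interior_S1 g"
    using p(1) openin_interior_of g(3) by (rule minimal_action_orbit_meets_openin)
  then have "h \<in> G" "\<phi> h \<omega> = \<omega>" "\<phi> h (\<phi> g \<omega>) = \<phi> g \<omega>"
    by (auto simp: pointwise_stabilizer_def H \<Delta>_def)
  define c where "c = inv\<^bsub>?H\<^esub> g \<otimes>\<^bsub>?H\<^esub> inv\<^bsub>?H\<^esub> h \<otimes>\<^bsub>?H\<^esub> g \<otimes>\<^bsub>?H\<^esub> h"
  have "c \<in> stabilizer ?H \<phi> \<omega>"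
    unfolding c_def using \<open>g \<in> carrier ?H\<close> \<open>h \<in> G\<close> \<omega>(1) \<open>\<phi> h \<omega> = \<omega>\<close> \<open>\<phi> h (\<phi> g \<omega>) = _\<close>
    by (intro commutator_in_stabilizer) (simp_all add: H)
  moreover have "c \<noteq> id" "fixed_interior_S1 c \<noteq> {}"
    unfolding c_def using homeo_group_commutator_fixes_open_set[OF grp GH g(1) \<open>h \<in> G\<close> p(2,3) h(2)] .
  ultimately show ?thesis using \<omega>(1) unfolding topologically_free_def by blast
qed

end
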